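(* Let $\mathbb{X}\subseteq\mathbb{P}^2$ be a $\Bbbk$-configuration of type $(1,2,\dots,s)$ with $s\ge2$, defined by subsets $\mathbb{X}_1,\dots,\mathbb{X}_s$ and lines $\mathbb{L}_1,\dots,\mathbb{L}_s$, with $\mathbb{X}_1=\{P\}$, and suppose that no line of $\mathbb{P}^2$ passing through $P$ contains $s$ points of $\mathbb{X}$. Suppose coordinates are chosen so that $P=[1:0:0]$ and $\mathbb{X}_2=\{[0:1:0],[0:0:1]\}$. Let $\mathbb{Y}=\mathbb{X}_2\cup\cdots\cup\mathbb{X}_s=\mathbb{X}\setminus\{P\}$. Then for all integers $m\ge s+1$, $\mathbf{H}_{R/(I_{m\mathbb{Y}}+I_P^m)}(ms-2)=0$, i.e. $(I_{m\mathbb{Y}}+I_P^m)_{ms-2}=R_{ms-2}$.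
   Context: $\Bbbk$ is an algebraically closed field and $R=\Bbbk[x_0,x_1,x_2]$. A $\Bbbk$-configuration of type $(d_1,\dots,d_s)$ is a finite set $\mathbb{X}\subseteq\mathbb{P}^2$ for which there exist integers $1\le d_1<\cdots<d_s$, subsets $\mathbb{X}_1,\dots,\mathbb{X}_s$ of $\mathbb{X}$ and distinct lines $\mathbb{L}_1,\dots,\mathbb{L}_s\subseteq\mathbb{P}^2$ such that (1) $\mathbb{X}=\bigcup_{i=1}^s\mathbb{X}_i$; (2) $|\mathbb{X}_i|=d_i$ and $\mathbb{X}_i\subseteq\mathbb{L}_i$ for each $i$; (3) for $1<i\le s$, $\mathbb{L}_i$ contains no point of $\mathbb{X}_j$ for any $j<i$. $I_P\subseteq R$ denotes the ideal of a point $P$ (so $I_{[1:0:0]}=\langle x_1,x_2\rangle$); for a finite set $\mathbb{Y}=\{Q_1,\dots,Q_n\}$, $I_{m\mathbb{Y}}=I_{Q_1}^m\cap\cdots\cap I_{Q_n}^m$. For a homogeneous ideal $I$, $\mathbf{H}_{R/I}(t)=\dim_\Bbbk R_t-\dim_\Bbbk I_t$. *)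

theory Defs
  imports "HOL-Library.Poly_Mapping" "HOL-Library.Product_Plus"
    "HOL-Computational_Algebra.Polynomial"
begin

text \<open>Monomials x0^i x1^j x2^k are exponent triples (i,j,k); the polynomial ring
  R = k[x0,x1,x2] is the ring of finitely supported coefficient functions
  (convolution product from Poly_Mapping).\<close>

type_synonym monom = "nat \<times> nat \<times> nat"
type_synonym 'a mpoly3 = "monom \<Rightarrow>\<^sub>0 'a"
type_synonym 'a pt3 = "'a \<times> 'a \<times> 'a"

definition alg_closed :: "'a::field itself \<Rightarrow> bool" where
  "alg_closed _ \<longleftrightarrow> (\<forall>p :: 'a poly. degree p > 0 \<longrightarrow> (\<exists>x. poly p x = 0))"

definition mdeg :: "monom \<Rightarrow> nat" where
  "mdeg m = fst m + fst (snd m) + snd (snd m)"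

definition homog :: "nat \<Rightarrow> 'a::comm_ring_1 mpoly3 set" where
  "homog t = {f. \<forall>m\<in>Poly_Mapping.keys f. mdeg m = t}"

definition eval3 :: "'a::comm_ring_1 mpoly3 \<Rightarrow> 'a pt3 \<Rightarrow> 'a" where
  "eval3 f Q = (\<Sum>m\<in>Poly_Mapping.keys f. Poly_Mapping.lookup f m * fst Q ^ fst m * fst (snd Q) ^ fst (snd m)
                              * snd (snd Q) ^ snd (snd m))"

definition is_ideal :: "'a::comm_ring_1 mpoly3 set \<Rightarrow> bool" where
  "is_ideal I \<longleftrightarrow> 0 \<in> I \<and> (\<forall>a\<in>I. \<forall>b\<in>I. a + b \<in> I) \<and> (\<forall>r. \<forall>a\<in>I. r * a \<in> I)"

definition ideal_gen :: "'a::comm_ring_1 mpoly3 set \<Rightarrow> 'a mpoly3 set" where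
  "ideal_gen S = \<Inter>{I. is_ideal I \<and> S \<subseteq> I}"

definition ideal_pow :: "'a::comm_ring_1 mpoly3 set \<Rightarrow> nat \<Rightarrow> 'a mpoly3 set" where
  "ideal_pow I m = ideal_gen {prod_list fs | fs. length fs = m \<and> set fs \<subseteq> I}"

definition ideal_sum :: "'a::comm_ring_1 mpoly3 set \<Rightarrow> 'a mpoly3 set \<Rightarrow> 'a mpoly3 set" where
  "ideal_sum I J = {a + b | a b. a \<in> I \<and> b \<in> J}"

definition ideal_pt :: "'a::comm_ring_1 pt3 \<Rightarrow> 'a mpoly3 set" where
  "ideal_pt Q = ideal_gen {f. \<exists>t. f \<in> homog t \<and> eval3 f Q = 0}"

definition ideal_fat :: "'a::comm_ring_1 pt3 set \<Rightarrow> nat \<Rightarrow> 'a mpoly3 set" where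
  "ideal_fat Y m = (\<Inter>Q\<in>Y. ideal_pow (ideal_pt Q) m)"

text \<open>Projective points / lines are represented by nonzero triples; two represent the same
  object iff proportional.\<close>
definition proportional :: "'a::field pt3 \<Rightarrow> 'a pt3 \<Rightarrow> bool" where
  "proportional u v \<longleftrightarrow> (\<exists>c. c \<noteq> 0 \<and> v = (c * fst u, c * fst (snd u), c * snd (snd u)))"

definition on_line :: "'a::field pt3 \<Rightarrow> 'a pt3 \<Rightarrow> bool" where
  "on_line L Q \<longleftrightarrow> fst L * fst Q + fst (snd L) * fst (snd Q) + snd (snd L) * snd (snd Q) = 0"

definition proj_pointset :: "'a::field pt3 set \<Rightarrow> bool" where
  "proj_pointset X \<longleftrightarrow> finite X \<and> 0 \<notin> X \<and>
     (\<forall>u\<in>X. \<forall>v\<in>X. proportional u v \<longrightarrow> u = v)"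

definition kconfig_with ::
  "'a::field pt3 set \<Rightarrow> nat \<Rightarrow> (nat \<Rightarrow> nat) \<Rightarrow> (nat \<Rightarrow> 'a pt3 set) \<Rightarrow> (nat \<Rightarrow> 'a pt3) \<Rightarrow> bool" where
  "kconfig_with X s d Xs Ls \<longleftrightarrow>
     proj_pointset X \<and> s \<ge> 1 \<and> 1 \<le> d 1 \<and> (\<forall>i\<in>{1..<s}. d i < d (Suc i)) \<and>
     X = (\<Union>i\<in>{1..s}. Xs i) \<and>
     (\<forall>i\<in>{1..s}. Ls i \<noteq> 0) \<and>
     (\<forall>i\<in>{1..s}. \<forall>j\<in>{1..s}. proportional (Ls i) (Ls j) \<longrightarrow> i = j) \<and>
     (\<forall>i\<in>{1..s}. card (Xs i) = d i \<and> Xs i \<subseteq> X \<and> (\<forall>Q\<in>Xs i. on_line (Ls i) Q)) \<and>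
     (\<forall>i\<in>{1..s}. \<forall>j\<in>{1..<i}. \<forall>Q\<in>Xs j. \<not> on_line (Ls i) Q)"

end

theory Submission
  imports Defs
begin

text \<open>
  Write \<open>J = I_{mY} + I_P^m\<close> and call \<open>b + c\<close> the level of the monomial \<open>x0^a x1^b x2^c\<close>.
  The monomials of degree \<open>ms - 2\<close> and level \<open>\<ge> m\<close> lie in \<open>I_P^m\<close>; we descend in the level.
  If \<open>\<ell>\<^sub>1, ..., \<ell>\<^sub>a\<close> are linear forms not vanishing at \<open>P\<close>, then \<open>x1^b x2^c \<ell>\<^sub>1 ... \<ell>\<^sub>a\<close> is a
  nonzero multiple of \<open>x0^a x1^b x2^c\<close> plus terms of higher level, so the monomial lies in \<open>J\<close>
  as soon as this product vanishes to order \<open>m\<close> at every point of \<open>Y\<close>. For \<open>b, c \<le> m - 2\<close> take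
  the \<open>\<ell>\<^sub>i\<close> to be \<open>x0\<close> (\<open>2m - 2 - b - c\<close> times) and \<open>L\<^sub>3, ..., L\<^sub>s\<close> (\<open>m\<close> times each). For
  \<open>x0^a x1^(m-1)\<close> the line through \<open>P\<close> and \<open>E = [0:1:0]\<close> has fewer than \<open>s\<close> points of \<open>X\<close>,
  so some \<open>X\<^sub>k\<close>, \<open>k \<ge> 3\<close>, misses it; replacing one copy of \<open>L\<^sub>k\<close> by the \<open>k\<close> lines joining \<open>E\<close>
  to the points of \<open>X\<^sub>k\<close> and using \<open>x0\<close> only \<open>m - k\<close> times gives multiplicity \<open>m\<close> at \<open>E\<close> too;
  \<open>x0^a x2^(m-1)\<close> is symmetric.
\<close>

section \<open>Products of linear forms\<close>

definition linear_form :: "'a::comm_ring_1 pt3 \<Rightarrow> 'a mpoly3" where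
  "linear_form c = Poly_Mapping.single (1,0,0) (fst c) + Poly_Mapping.single (0,1,0) (fst (snd c))
     + Poly_Mapping.single (0,0,1) (snd (snd c))"

definition forms_prod :: "'a::comm_ring_1 pt3 list \<Rightarrow> 'a mpoly3" where
  "forms_prod cs = prod_list (map linear_form cs)"

lemma forms_prod_Nil [simp]: "forms_prod [] = 1"
  by (simp add: forms_prod_def)

lemma forms_prod_Cons [simp]: "forms_prod (c # cs) = linear_form c * forms_prod cs"
  by (simp add: forms_prod_def)

lemma forms_prod_append [simp]: "forms_prod (cs @ ds) = forms_prod cs * forms_prod ds"
  by (induction cs) (simp_all add: mult.assoc)

definition deg_x12 :: "monom \<Rightarrow> nat" where
  "deg_x12 \<mu> = fst (snd \<mu>) + snd (snd \<mu>)"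

lemma mdeg_add [simp]: "mdeg (\<mu> + \<nu>) = mdeg \<mu> + mdeg \<nu>"
  by (cases \<mu>; cases \<nu>) (simp add: mdeg_def)

lemma deg_x12_add [simp]: "deg_x12 (\<mu> + \<nu>) = deg_x12 \<mu> + deg_x12 \<nu>"
  by (cases \<mu>; cases \<nu>) (simp add: deg_x12_def)

lemma keys_add_subset:
  "Poly_Mapping.keys f \<subseteq> A \<Longrightarrow> Poly_Mapping.keys g \<subseteq> A \<Longrightarrow> Poly_Mapping.keys (f + g) \<subseteq> A"
  using keys_add[of f g] by blast

lemma keys_mult_deg_x12_ge:
  fixes f g :: "'a::comm_ring_1 mpoly3"
  assumes "Poly_Mapping.keys f \<subseteq> {\<mu>. i \<le> deg_x12 \<mu>}" "Poly_Mapping.keys g \<subseteq> {\<mu>. j \<le> deg_x12 \<mu>}"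
  shows "Poly_Mapping.keys (f * g) \<subseteq> {\<mu>. i + j \<le> deg_x12 \<mu>}"
proof
  fix \<mu> assume "\<mu> \<in> Poly_Mapping.keys (f * g)"
  then obtain \<alpha> \<beta> where "\<mu> = \<alpha> + \<beta>" "\<alpha> \<in> Poly_Mapping.keys f" "\<beta> \<in> Poly_Mapping.keys g"
    using keys_mult[of f g] by blast
  with assms show "\<mu> \<in> {\<mu>. i + j \<le> deg_x12 \<mu>}" by (auto intro: add_mono)
qed

lemma forms_prod_leading_term:
  fixes cs :: "'a::comm_ring_1 pt3 list"
  obtains r where "forms_prod cs = Poly_Mapping.single (length cs, 0, 0) (prod_list (map fst cs)) + r"
    and "Poly_Mapping.keys r \<subseteq> {\<mu>. 1 \<le> deg_x12 \<mu>}"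
proof (induction cs arbitrary: thesis)
  case Nil
  show ?case by (rule Nil.prems[of 0]) (simp_all add: zero_prod_def[symmetric])
next
  case (Cons c cs)
  obtain r where r: "forms_prod cs = Poly_Mapping.single (length cs, 0, 0) (prod_list (map fst cs)) + r"
    "Poly_Mapping.keys r \<subseteq> {\<mu>. 1 \<le> deg_x12 \<mu>}"
    using Cons.IH by blast
  define a :: "'a mpoly3" where "a = Poly_Mapping.single (1,0,0) (fst c)"
  define v :: "'a mpoly3" where
    "v = Poly_Mapping.single (0,1,0) (fst (snd c)) + Poly_Mapping.single (0,0,1) (snd (snd c))"
  define p :: "'a mpoly3" where "p = Poly_Mapping.single (length cs, 0, 0) (prod_list (map fst cs))"
  have "forms_prod (c # cs) = a * p + (a * r + v * (p + r))"
    using r(1) by (simp add: linear_form_def a_def v_def p_def algebra_simps)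
  moreover have "a * p = Poly_Mapping.single (length (c # cs), 0, 0) (prod_list (map fst (c # cs)))"
    by (simp add: a_def p_def mult_single)
  moreover have "Poly_Mapping.keys v \<subseteq> {\<mu>. 1 \<le> deg_x12 \<mu>}"
    unfolding v_def by (rule keys_add_subset) (auto simp: deg_x12_def)
  then have "Poly_Mapping.keys (a * r + v * (p + r)) \<subseteq> {\<mu>. 1 \<le> deg_x12 \<mu>}"
    using keys_mult_deg_x12_ge[OF _ r(2), of a 0] keys_mult_deg_x12_ge[of v 1 "p + r" 0]
    by (intro keys_add_subset) auto
  ultimately show ?case using Cons.prems by metis
qed

lemma forms_prod_replicate_x0:
  "forms_prod (replicate n (1,0,0)) = Poly_Mapping.single (n,0,0) (1::'a::comm_ring_1)"
  by (induction n) (simp_all add: linear_form_def mult_single zero_prod_def[symmetric])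

lemma forms_prod_replicate_x1:
  "forms_prod (replicate n (0,1,0)) = Poly_Mapping.single (0,n,0) (1::'a::comm_ring_1)"
  by (induction n) (simp_all add: linear_form_def mult_single zero_prod_def[symmetric])

lemma forms_prod_replicate_x2:
  "forms_prod (replicate n (0,0,1)) = Poly_Mapping.single (0,0,n) (1::'a::comm_ring_1)"
  by (induction n) (simp_all add: linear_form_def mult_single zero_prod_def[symmetric])

lemma forms_prod_monomial_factor:
  "forms_prod (replicate b (0,1,0) @ replicate c (0,0,1) @ cs)
     = Poly_Mapping.single (0,b,c) (1::'a::comm_ring_1) * forms_prod cs"
  by (simp add: forms_prod_replicate_x1 forms_prod_replicate_x2 mult_single mult.assoc[symmetric])

lemma forms_prod_monomial:
  "forms_prod (replicate b (0,1,0) @ replicate c (0,0,1) @ replicate a (1,0,0))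
     = Poly_Mapping.single (a,b,c) (1::'a::comm_ring_1)"
  by (simp only: forms_prod_monomial_factor forms_prod_replicate_x0 mult_single) simp

lemma homog_mult:
  fixes f g :: "'a::comm_ring_1 mpoly3"
  assumes "f \<in> homog i" "g \<in> homog j"
  shows "f * g \<in> homog (i + j)"
  unfolding homog_def
proof (intro CollectI ballI)
  fix \<mu> assume "\<mu> \<in> Poly_Mapping.keys (f * g)"
  then obtain \<alpha> \<beta> where "\<mu> = \<alpha> + \<beta>" "\<alpha> \<in> Poly_Mapping.keys f" "\<beta> \<in> Poly_Mapping.keys g"
    using keys_mult[of f g] by blast
  with assms show "mdeg \<mu> = i + j" by (simp add: homog_def)
qed

lemma homog_diff: "f \<in> homog d \<Longrightarrow> g \<in> homog d \<Longrightarrow> f - g \<in> homog d"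
  using keys_diff[of f g] by (auto simp: homog_def)

lemma single_mem_homog: "mdeg \<mu> = d \<Longrightarrow> Poly_Mapping.single \<mu> c \<in> homog d"
  by (simp add: homog_def)

lemma linear_form_homog: "linear_form c \<in> homog 1"
proof -
  have "Poly_Mapping.keys (linear_form c) \<subseteq> {(1,0,0), (0,1,0), (0,0,1)}"
    unfolding linear_form_def by (intro keys_add_subset) auto
  then show ?thesis by (auto simp: homog_def mdeg_def)
qed

lemma forms_prod_homog: "forms_prod cs \<in> homog (length cs)"
proof (induction cs)
  case Nil
  show ?case by (simp add: homog_def mdeg_def zero_prod_def[symmetric])
next
  case (Cons c cs)
  then show ?case using homog_mult[OF linear_form_homog Cons.IH] by simp
qed

lemma eval3_eq_sum_over:
  fixes f :: "'a::comm_ring_1 mpoly3"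
  assumes "finite S" "Poly_Mapping.keys f \<subseteq> S"
  shows "eval3 f Q = (\<Sum>\<mu>\<in>S. Poly_Mapping.lookup f \<mu> * fst Q ^ fst \<mu> * fst (snd Q) ^ fst (snd \<mu>)
                              * snd (snd Q) ^ snd (snd \<mu>))"
  unfolding eval3_def
  by (rule sum.mono_neutral_left) (use assms in \<open>auto simp: in_keys_iff\<close>)

lemma eval3_add: "eval3 (f + g) Q = eval3 f Q + eval3 (g :: 'a::comm_ring_1 mpoly3) Q"
proof -
  have fin: "finite (Poly_Mapping.keys f \<union> Poly_Mapping.keys g)" by simp
  show ?thesis
    using keys_add[of f g]
    by (simp add: eval3_eq_sum_over[OF fin] lookup_add sum.distrib distrib_right)
qed

lemma eval3_single:
  "eval3 (Poly_Mapping.single \<mu> (c::'a::comm_ring_1)) Q =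
     c * fst Q ^ fst \<mu> * fst (snd Q) ^ fst (snd \<mu>) * snd (snd Q) ^ snd (snd \<mu>)"
  by (subst eval3_eq_sum_over[of "{\<mu>}"]) auto

lemma eval3_linear_form:
  "eval3 (linear_form c) Q = fst c * fst Q + fst (snd c) * fst (snd Q) + snd (snd c) * snd (snd Q)"
  by (simp add: linear_form_def eval3_add eval3_single)

section \<open>Ideals and fat points\<close>

lemma is_ideal_ideal_gen: "is_ideal (ideal_gen S)"
  unfolding ideal_gen_def is_ideal_def by auto

lemma subset_ideal_gen: "S \<subseteq> ideal_gen S"
  unfolding ideal_gen_def by blast

lemma ideal_diff_mem:
  fixes I :: "'a::comm_ring_1 mpoly3 set"
  assumes "is_ideal I" "f \<in> I" "g \<in> I"
  shows "f - g \<in> I"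
proof -
  have "f + (- 1) * g \<in> I" using assms unfolding is_ideal_def by blast
  then show ?thesis by simp
qed

lemma sum_mem_ideal: "finite A \<Longrightarrow> is_ideal I \<Longrightarrow> (\<And>x. x \<in> A \<Longrightarrow> f x \<in> I) \<Longrightarrow> sum f A \<in> I"
  by (induction A rule: finite_induct) (auto simp: is_ideal_def)

lemma is_ideal_ideal_pow: "is_ideal (ideal_pow I m)"
  unfolding ideal_pow_def by (rule is_ideal_ideal_gen)

lemma is_ideal_ideal_fat: "is_ideal (ideal_fat Y m)"
  using is_ideal_ideal_pow unfolding ideal_fat_def is_ideal_def by auto

lemma is_ideal_ideal_sum:
  fixes I J :: "'a::comm_ring_1 mpoly3 set"
  assumes I: "is_ideal I" and J: "is_ideal J"
  shows "is_ideal (ideal_sum I J)"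
  unfolding is_ideal_def
proof (intro conjI ballI allI)
  have "0 + 0 \<in> ideal_sum I J"
    using I J unfolding ideal_sum_def is_ideal_def by blast
  then show "0 \<in> ideal_sum I J" by simp
next
  fix f g assume "f \<in> ideal_sum I J" "g \<in> ideal_sum I J"
  then obtain a b a' b' where "f = a + b" "g = a' + b'" "a \<in> I" "a' \<in> I" "b \<in> J" "b' \<in> J"
    unfolding ideal_sum_def by blast
  moreover have "(a + a') + (b + b') \<in> ideal_sum I J"
    using calculation I J unfolding ideal_sum_def is_ideal_def by blast
  ultimately show "f + g \<in> ideal_sum I J" by (simp add: algebra_simps)
next
  fix r f assume "f \<in> ideal_sum I J"
  then obtain a b where "f = a + b" "a \<in> I" "b \<in> J" unfolding ideal_sum_def by blast
  moreover have "r * a + r * b \<in> ideal_sum I J"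
    using calculation I J unfolding ideal_sum_def is_ideal_def by blast
  ultimately show "r * f \<in> ideal_sum I J" by (simp add: algebra_simps)
qed

lemma ideal_sum_mem_left: "is_ideal J \<Longrightarrow> f \<in> I \<Longrightarrow> f \<in> ideal_sum I J"
proof -
  assume "is_ideal J" "f \<in> I"
  then have "f + 0 \<in> ideal_sum I J" unfolding ideal_sum_def is_ideal_def by blast
  then show ?thesis by simp
qed

lemma ideal_sum_mem_right: "is_ideal I \<Longrightarrow> g \<in> J \<Longrightarrow> g \<in> ideal_sum I J"
proof -
  assume "is_ideal I" "g \<in> J"
  then have "0 + g \<in> ideal_sum I J" unfolding ideal_sum_def is_ideal_def by blast
  then show ?thesis by simp
qed

definition count_through :: "'a::field pt3 \<Rightarrow> 'a pt3 list \<Rightarrow> nat" where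
  "count_through Q cs = length (filter (\<lambda>c. on_line c Q) cs)"

lemma count_through_append [simp]:
  "count_through Q (cs @ ds) = count_through Q cs + count_through Q ds"
  by (simp add: count_through_def)

lemma count_through_replicate [simp]:
  "count_through Q (replicate n c) = (if on_line c Q then n else 0)"
  by (simp add: count_through_def)

lemma count_through_map_all:
  "(\<And>x. x \<in> set xs \<Longrightarrow> on_line (g x) Q) \<Longrightarrow> count_through Q (map g xs) = length xs"
  by (induction xs) (auto simp: count_through_def)

lemma count_through_map_ge_1:
  "x \<in> set xs \<Longrightarrow> on_line (g x) Q \<Longrightarrow> 1 \<le> count_through Q (map g xs)"
  by (induction xs) (auto simp: count_through_def)

lemma linear_form_mem_ideal_pt: "on_line c Q \<Longrightarrow> linear_form c \<in> ideal_pt Q"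
  unfolding ideal_pt_def using linear_form_homog[of c]
  by (intro subsetD[OF subset_ideal_gen]) (auto simp: eval3_linear_form on_line_def)

lemma forms_prod_filter:
  "forms_prod cs = forms_prod (filter p cs) * forms_prod (filter (\<lambda>c. \<not> p c) cs)"
  by (induction cs) (simp_all add: mult_ac)

lemma forms_prod_mem_ideal_pow:
  fixes Q :: "'a::field pt3"
  assumes "m \<le> count_through Q cs"
  shows "forms_prod cs \<in> ideal_pow (ideal_pt Q) m"
proof -
  define vs where "vs = filter (\<lambda>c. on_line c Q) cs"
  have "m \<le> length vs" using assms by (simp add: vs_def count_through_def)
  then have "forms_prod (take m vs) \<in> ideal_pow (ideal_pt Q) m"
    unfolding ideal_pow_def forms_prod_def
    by (intro subsetD[OF subset_ideal_gen] CollectI exI[of _ "map linear_form (take m vs)"])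
      (auto simp: vs_def dest!: in_set_takeD intro!: linear_form_mem_ideal_pt)
  then have "(forms_prod (drop m vs) * forms_prod (filter (\<lambda>c. \<not> on_line c Q) cs))
      * forms_prod (take m vs) \<in> ideal_pow (ideal_pt Q) m"
    using is_ideal_ideal_pow unfolding is_ideal_def by blast
  moreover have "forms_prod cs = (forms_prod (drop m vs)
      * forms_prod (filter (\<lambda>c. \<not> on_line c Q) cs)) * forms_prod (take m vs)"
    using forms_prod_filter[of cs "\<lambda>c. on_line c Q"] forms_prod_append[of "take m vs" "drop m vs"]
    by (simp add: vs_def mult_ac)
  ultimately show ?thesis by simp
qed

lemma forms_prod_mem_ideal_fat:
  "(\<And>Q. Q \<in> Y \<Longrightarrow> m \<le> count_through Q cs) \<Longrightarrow> forms_prod cs \<in> ideal_fat Y m"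
  unfolding ideal_fat_def using forms_prod_mem_ideal_pow by blast

section \<open>Extracting monomials\<close>

definition contains_upper_monomials :: "'a::comm_ring_1 mpoly3 set \<Rightarrow> nat \<Rightarrow> nat \<Rightarrow> bool" where
  "contains_upper_monomials J d k \<longleftrightarrow>
     (\<forall>\<mu>. mdeg \<mu> = d \<and> k \<le> deg_x12 \<mu> \<longrightarrow> Poly_Mapping.single \<mu> 1 \<in> J)"

lemma poly_mapping_monomial_expansion:
  "f = (\<Sum>\<mu>\<in>Poly_Mapping.keys f. Poly_Mapping.single \<mu> (Poly_Mapping.lookup f \<mu>))"
  by (rule poly_mapping_eqI) (auto simp: lookup_sum lookup_single when_def in_keys_iff)

lemma homog_mem_of_contains_upper_monomials:
  fixes J :: "'a::comm_ring_1 mpoly3 set"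
  assumes J: "is_ideal J" and mon: "contains_upper_monomials J d k"
    and f: "f \<in> homog d" "Poly_Mapping.keys f \<subseteq> {\<mu>. k \<le> deg_x12 \<mu>}"
  shows "f \<in> J"
proof -
  have "(\<Sum>\<mu>\<in>Poly_Mapping.keys f. Poly_Mapping.single \<mu> (Poly_Mapping.lookup f \<mu>)) \<in> J"
  proof (rule sum_mem_ideal[OF finite_keys J])
    fix \<mu> assume "\<mu> \<in> Poly_Mapping.keys f"
    then have "Poly_Mapping.single \<mu> 1 \<in> J"
      using f mon unfolding homog_def contains_upper_monomials_def by blast
    then have "Poly_Mapping.single 0 (Poly_Mapping.lookup f \<mu>) * Poly_Mapping.single \<mu> 1 \<in> J"
      using J by (simp add: is_ideal_def)
    then show "Poly_Mapping.single \<mu> (Poly_Mapping.lookup f \<mu>) \<in> J" by (simp add: mult_single)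
  qed
  then show ?thesis using poly_mapping_monomial_expansion[of f] by simp
qed

text \<open>The product is \<open>\<Prod>(fst cs) x0^a x1^b x2^c\<close> plus monomials of higher level, which lie in \<open>J\<close>.\<close>
lemma monomial_mem_of_forms_prod_mem:
  fixes J :: "'a::field mpoly3 set"
  assumes J: "is_ideal J" and mon: "contains_upper_monomials J d (b + c + 1)"
    and G: "forms_prod (replicate b (0,1,0) @ replicate c (0,0,1) @ cs) \<in> J"
    and len: "length cs + b + c = d" and nz: "prod_list (map fst cs) \<noteq> 0"
  shows "Poly_Mapping.single (length cs, b, c) 1 \<in> J"
proof -
  define G where "G = forms_prod (replicate b (0,1,0) @ replicate c (0,0,1) @ cs)"
  define \<pi> where "\<pi> = prod_list (map fst cs)"
  obtain r where r: "forms_prod cs = Poly_Mapping.single (length cs, 0, 0) \<pi> + r"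
    "Poly_Mapping.keys r \<subseteq> {\<mu>. 1 \<le> deg_x12 \<mu>}"
    using forms_prod_leading_term[of cs] unfolding \<pi>_def by blast
  define r' where "r' = Poly_Mapping.single (0,b,c) 1 * r"
  have G_split: "G = Poly_Mapping.single (length cs, b, c) \<pi> + r'"
    unfolding G_def r'_def forms_prod_monomial_factor r(1) distrib_left mult_single by simp
  have "Poly_Mapping.keys r' \<subseteq> {\<mu>. b + c + 1 \<le> deg_x12 \<mu>}"
    unfolding r'_def by (rule keys_mult_deg_x12_ge[OF _ r(2)]) (auto simp: deg_x12_def)
  moreover have "r' \<in> homog d"
  proof -
    have "length (replicate b (0::'a,1::'a,0::'a) @ replicate c (0,0,1) @ cs) = d"
      using len by simp
    then have "G \<in> homog d" unfolding G_def by (metis forms_prod_homog)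
    moreover have "Poly_Mapping.single (length cs, b, c) \<pi> \<in> homog d"
      by (rule single_mem_homog) (use len in \<open>simp add: mdeg_def\<close>)
    moreover have "r' = G - Poly_Mapping.single (length cs, b, c) \<pi>" by (simp add: G_split)
    ultimately show ?thesis by (simp add: homog_diff)
  qed
  ultimately have "r' \<in> J" using homog_mem_of_contains_upper_monomials[OF J mon] by blast
  then have "G - r' \<in> J" using ideal_diff_mem[OF J G[folded G_def]] by blast
  then have "Poly_Mapping.single (length cs, b, c) \<pi> \<in> J" by (simp add: G_split)
  then have "Poly_Mapping.single 0 (inverse \<pi>) * Poly_Mapping.single (length cs, b, c) \<pi> \<in> J"
    using J by (simp add: is_ideal_def)
  then show ?thesis using nz by (simp add: \<pi>_def mult_single)
qed

lemma card_le_of_disjoint_meets: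
  assumes "finite S"
    and meets: "\<And>k. k \<in> K \<Longrightarrow> A k \<inter> S \<noteq> {}"
    and disjoint: "\<And>i j. i \<in> K \<Longrightarrow> j \<in> K \<Longrightarrow> i \<noteq> j \<Longrightarrow> A i \<inter> A j = {}"
  shows "card K \<le> card (S \<inter> (\<Union>k\<in>K. A k))"
proof -
  have "\<forall>k\<in>K. \<exists>x. x \<in> A k \<inter> S" using meets by blast
  then obtain f where f: "\<And>k. k \<in> K \<Longrightarrow> f k \<in> A k \<inter> S"
    by (metis bchoice)
  have "inj_on f K"
  proof (rule inj_onI)
    fix i j assume ij: "i \<in> K" "j \<in> K" "f i = f j"
    show "i = j"
    proof (rule ccontr)
      assume "i \<noteq> j"
      then have "A i \<inter> A j = {}" using disjoint ij by blast
      moreover have "f i \<in> A i" "f j \<in> A j" using f ij by blast+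
      ultimately show False using ij(3) by auto
    qed
  qed
  moreover have "f ` K \<subseteq> S \<inter> (\<Union>k\<in>K. A k)" using f by blast
  ultimately show ?thesis using assms(1) by (meson card_inj_on_le finite_Int)
qed

definition replicate_each :: "nat \<Rightarrow> 'b list \<Rightarrow> 'b list" where
  "replicate_each m xs = concat (map (replicate m) xs)"

lemma length_replicate_each [simp]: "length (replicate_each m xs) = m * length xs"
  by (induction xs) (simp_all add: replicate_each_def)

lemma prod_list_fst_replicate_each:
  fixes xs :: "('b::comm_monoid_mult \<times> 'c) list"
  shows "prod_list (map fst (replicate_each m xs)) = prod_list (map fst xs) ^ m"
  by (induction xs) (simp_all add: replicate_each_def power_mult_distrib)

lemma count_through_replicate_each_ge:
  "L \<in> set xs \<Longrightarrow> on_line L Q \<Longrightarrow> m \<le> count_through Q (replicate_each m xs)"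
  by (induction xs) (auto simp: replicate_each_def)

definition line_through :: "'a::comm_ring_1 pt3 \<Rightarrow> 'a pt3 \<Rightarrow> 'a pt3" where
  "line_through u v = (fst (snd u) * snd (snd v) - snd (snd u) * fst (snd v),
                       snd (snd u) * fst v - fst u * snd (snd v),
                       fst u * fst (snd v) - fst (snd u) * fst v)"

lemma on_line_line_through_left: "on_line (line_through u v) u"
  by (simp add: line_through_def on_line_def algebra_simps)

lemma on_line_line_through_right: "on_line (line_through u v) v"
  by (simp add: line_through_def on_line_def algebra_simps)

lemma fst_line_through_eq_0_iff:
  "fst (line_through Q E) = 0 \<longleftrightarrow> on_line (line_through (1,0,0) E) (Q :: 'a::field pt3)"
proof -
  have "on_line (line_through (1,0,0) E) Q = (- fst (line_through Q E) = 0)"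
    by (simp add: line_through_def on_line_def algebra_simps)
  then show ?thesis by simp
qed

section \<open>Configurations of type \<open>(1, 2, ..., s)\<close>\<close>

locale kconfig_1_to_s =
  fixes X :: "'a::field pt3 set" and s :: nat and Xs :: "nat \<Rightarrow> 'a pt3 set" and Ls :: "nat \<Rightarrow> 'a pt3"
  assumes config: "kconfig_with X s (\<lambda>i. i) Xs Ls"
    and s_ge_2: "2 \<le> s"
    and Xs_1: "Xs 1 = {(1,0,0)}"
    and Xs_2: "Xs 2 = {(0,1,0), (0,0,1)}"
    and few_on_lines_through_P: "\<And>L. L \<noteq> 0 \<Longrightarrow> on_line L (1,0,0) \<Longrightarrow> card {Q\<in>X. on_line L Q} < s"
begin

lemma finite_X: "finite X"
  using config unfolding kconfig_with_def proj_pointset_def by (elim conjE)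

lemma X_eq_Union_Xs: "X = (\<Union>i\<in>{1..s}. Xs i)"
  using config unfolding kconfig_with_def by (elim conjE)

lemma Xs_props: "\<forall>i\<in>{1..s}. card (Xs i) = i \<and> Xs i \<subseteq> X \<and> (\<forall>Q\<in>Xs i. on_line (Ls i) Q)"
  using config unfolding kconfig_with_def by (elim conjE)

lemma Xs_subset_X: "i \<in> {1..s} \<Longrightarrow> Xs i \<subseteq> X"
  using Xs_props by blast

lemma card_Xs: "i \<in> {1..s} \<Longrightarrow> card (Xs i) = i"
  using Xs_props by blast

lemma on_line_Ls: "i \<in> {1..s} \<Longrightarrow> Q \<in> Xs i \<Longrightarrow> on_line (Ls i) Q"
  using Xs_props by blast

lemma not_on_line_Ls: "i \<in> {1..s} \<Longrightarrow> j \<in> {1..<i} \<Longrightarrow> Q \<in> Xs j \<Longrightarrow> \<not> on_line (Ls i) Q"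
proof -
  have "\<forall>i\<in>{1..s}. \<forall>j\<in>{1..<i}. \<forall>Q\<in>Xs j. \<not> on_line (Ls i) Q"
    using config unfolding kconfig_with_def by (elim conjE)
  then show "i \<in> {1..s} \<Longrightarrow> j \<in> {1..<i} \<Longrightarrow> Q \<in> Xs j \<Longrightarrow> \<not> on_line (Ls i) Q" by blast
qed

lemma Xs_disjoint:
  assumes "i \<in> {1..s}" "j \<in> {1..s}" "i \<noteq> j"
  shows "Xs i \<inter> Xs j = {}"
proof -
  have "Xs i \<inter> Xs j = {}" if "i \<in> {1..s}" "j \<in> {1..s}" "i < j" for i j
    using that on_line_Ls[of j] not_on_line_Ls[of j i] by fastforce
  then show ?thesis using assms by (metis Int_commute linorder_neqE_nat)
qed

lemma fst_Ls_nonzero: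
  assumes "k \<in> {2..s}"
  shows "fst (Ls k) \<noteq> 0"
proof -
  have "(1,0,0) \<in> Xs 1" unfolding Xs_1 by simp
  then have "\<not> on_line (Ls k) (1,0,0)" using not_on_line_Ls[of k 1] assms by simp
  then show ?thesis by (simp add: on_line_def)
qed

lemma X_minus_P_cases:
  assumes "Q \<in> X - {(1,0,0)}"
  shows "Q \<in> Xs 2 \<or> (\<exists>k\<in>{3..s}. Q \<in> Xs k)"
proof -
  have "Q \<in> (\<Union>i\<in>{1..s}. Xs i)" using assms X_eq_Union_Xs by simp
  then obtain i where "i \<in> {1..s}" "Q \<in> Xs i" by blast
  moreover have "i \<noteq> 1"
  proof
    assume "i = 1"
    with \<open>Q \<in> Xs i\<close> have "Q = (1,0,0)" using Xs_1 by blast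
    with assms show False by simp
  qed
  ultimately have "i = 2 \<or> i \<in> {3..s}" by auto
  with \<open>Q \<in> Xs i\<close> show ?thesis by blast
qed

lemma not_in_Xs_ge_3:
  assumes "k \<in> {3..s}" "Q \<in> Xs 1 \<union> Xs 2"
  shows "Q \<notin> Xs k"
proof -
  have "Xs 1 \<inter> Xs k = {}" "Xs 2 \<inter> Xs k = {}"
    using assms(1) s_ge_2 by (intro Xs_disjoint; simp)+
  then show ?thesis using assms(2) by blast
qed

lemma exists_block_off_line:
  assumes L: "L \<noteq> 0" "on_line L (1,0,0)" and E: "E \<in> Xs 2" "on_line L E"
  shows "\<exists>k\<in>{3..s}. \<forall>Q\<in>Xs k. \<not> on_line L Q"
proof (rule ccontr)
  assume none: "\<not> ?thesis"
  define S where "S = {Q\<in>X. on_line L Q}"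
  define U where "U = S \<inter> (\<Union>k\<in>{3..s}. Xs k)"
  have meets: "Xs k \<inter> S \<noteq> {}" if k: "k \<in> {3..s}" for k
  proof -
    obtain Q where "Q \<in> Xs k" "on_line L Q" using k none by blast
    moreover have "Xs k \<subseteq> X" using k by (intro Xs_subset_X) simp
    ultimately show ?thesis unfolding S_def by blast
  qed
  have disjoint: "Xs i \<inter> Xs j = {}" if "i \<in> {3..s}" "j \<in> {3..s}" "i \<noteq> j" for i j
    using that by (intro Xs_disjoint) auto
  have "finite S" using finite_X unfolding S_def by simp
  then have "card {3..s} \<le> card U"
    unfolding U_def using meets disjoint by (rule card_le_of_disjoint_meets)
  then have card_U: "s - 2 \<le> card U" by simp
  have P: "(1,0,0) \<in> Xs 1" unfolding Xs_1 by simp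
  have off_U: "Q \<notin> U" if "Q \<in> Xs 1 \<union> Xs 2" for Q
    using not_in_Xs_ge_3[OF _ that] unfolding U_def by blast
  have "(1,0,0) \<notin> Xs 2" unfolding Xs_2 by simp
  then have "(1,0,0) \<noteq> E" using E(1) by blast
  moreover have "(1,0,0) \<notin> U" "E \<notin> U" using off_U P E(1) by blast+
  moreover have "finite U" unfolding U_def using \<open>finite S\<close> by simp
  ultimately have "card (insert (1,0,0) (insert E U)) = card U + 2" by simp
  have "(1,0,0) \<in> X" "E \<in> X"
    using P E(1) Xs_subset_X[of 1] Xs_subset_X[of 2] s_ge_2 by auto
  then have "insert (1,0,0) (insert E U) \<subseteq> S"
    using L(2) E(2) unfolding S_def U_def by blast
  then have "card (insert (1,0,0) (insert E U)) \<le> card S"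
    using \<open>finite S\<close> by (rule card_mono[rotated])
  then have "s \<le> card S" using card_U s_ge_2 \<open>card (insert _ _) = _\<close> by linarith
  then show False using few_on_lines_through_P[OF L] unfolding S_def by simp
qed

lemma fst_Ls_prod_nonzero:
  "set ks \<subseteq> {3..s} \<Longrightarrow> prod_list (map fst (map Ls ks)) \<noteq> 0"
  using fst_Ls_nonzero by (fastforce simp: prod_list_zero_iff)

end

locale kconfig_1_to_s_power = kconfig_1_to_s +
  fixes m :: nat
  assumes m_ge: "s + 1 \<le> m"
begin

abbreviation J :: "'a mpoly3 set" where
  "J \<equiv> ideal_sum (ideal_fat (X - {(1,0,0)}) m) (ideal_pow (ideal_pt (1,0,0)) m)"

lemma is_ideal_J: "is_ideal J"
  by (intro is_ideal_ideal_sum is_ideal_ideal_fat is_ideal_ideal_pow)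

lemma forms_prod_mem_J:
  assumes "\<And>Q. Q \<in> Xs 2 \<Longrightarrow> m \<le> count_through Q cs"
    and "\<And>k Q. k \<in> {3..s} \<Longrightarrow> Q \<in> Xs k \<Longrightarrow> m \<le> count_through Q cs"
  shows "forms_prod cs \<in> J"
  using assms X_minus_P_cases
  by (intro ideal_sum_mem_left[OF is_ideal_ideal_pow] forms_prod_mem_ideal_fat) blast

lemma contains_upper_monomials_m: "contains_upper_monomials J (m * s - 2) m"
  unfolding contains_upper_monomials_def
proof (intro allI impI)
  fix \<mu> :: monom assume "mdeg \<mu> = m * s - 2 \<and> m \<le> deg_x12 \<mu>"
  moreover obtain a b c where \<mu>: "\<mu> = (a, b, c)" by (cases \<mu>)
  ultimately have "m \<le> count_through (1,0,0)
      (replicate b (0,1,0) @ replicate c (0,0,1) @ replicate a (1::'a,0::'a,0::'a))"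
    by (simp add: on_line_def deg_x12_def)
  then have "forms_prod (replicate b (0,1,0) @ replicate c (0,0,1) @ replicate a (1,0,0))
      \<in> ideal_pow (ideal_pt (1::'a,0::'a,0::'a)) m"
    by (rule forms_prod_mem_ideal_pow)
  then have "Poly_Mapping.single \<mu> 1 \<in> ideal_pow (ideal_pt (1::'a,0::'a,0::'a)) m"
    unfolding forms_prod_monomial \<mu> .
  then show "Poly_Mapping.single \<mu> 1 \<in> J"
    by (rule ideal_sum_mem_right[OF is_ideal_ideal_fat])
qed

lemma interior_monomial_mem_J:
  assumes deg: "mdeg (a,b,c) = m * s - 2" and b: "b \<le> m - 2" and c: "c \<le> m - 2"
    and upper: "contains_upper_monomials J (m * s - 2) (b + c + 1)"
  shows "Poly_Mapping.single (a,b,c) 1 \<in> J"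
proof -
  define e where "e = 2 * m - 2 - b - c"
  define cs where "cs = replicate e (1::'a,0::'a,0::'a) @ replicate_each m (map Ls [3..<Suc s])"
  have "length cs = e + m * (s - 2)" by (simp add: cs_def del: upt_Suc)
  moreover have "m * s = m * (s - 2) + 2 * m"
    using s_ge_2 by (simp add: diff_mult_distrib2)
  ultimately have len: "length cs + b + c = m * s - 2"
    using b c m_ge unfolding e_def by linarith
  have "set [3..<Suc s] \<subseteq> {3..s}" by auto
  then have nz: "prod_list (map fst cs) \<noteq> 0"
    using fst_Ls_prod_nonzero by (simp add: cs_def prod_list_fst_replicate_each del: upt_Suc)
  have "forms_prod (replicate b (0,1,0) @ replicate c (0,0,1) @ cs) \<in> J"
  proof (rule forms_prod_mem_J)
    fix Q assume "Q \<in> Xs 2"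
    then have "m \<le> count_through Q (replicate b (0,1,0) @ replicate c (0,0,1) @ replicate e (1,0,0))"
      using b c m_ge s_ge_2 unfolding Xs_2 e_def by (auto simp: on_line_def)
    then show "m \<le> count_through Q (replicate b (0,1,0) @ replicate c (0,0,1) @ cs)"
      by (simp add: cs_def del: upt_Suc)
  next
    fix k Q assume k: "k \<in> {3..s}" and Q: "Q \<in> Xs k"
    have "Ls k \<in> set (map Ls [3..<Suc s])" using k by (simp del: upt_Suc)
    moreover have "on_line (Ls k) Q" using k Q by (intro on_line_Ls) auto
    ultimately have "m \<le> count_through Q (replicate_each m (map Ls [3..<Suc s]))"
      by (rule count_through_replicate_each_ge)
    then show "m \<le> count_through Q (replicate b (0,1,0) @ replicate c (0,0,1) @ cs)"
      by (simp add: cs_def)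
  qed
  then have "Poly_Mapping.single (length cs, b, c) 1 \<in> J"
    using monomial_mem_of_forms_prod_mem[OF is_ideal_J upper _ len nz] by blast
  moreover have "a = length cs" using deg len by (simp add: mdeg_def)
  ultimately show ?thesis by simp
qed

lemma obtain_edge_forms:
  assumes E: "E \<in> Xs 2"
  obtains cs where "length cs + (m - 1) = m * s - 2" and "prod_list (map fst cs) \<noteq> 0"
    and "\<And>k Q. k \<in> {3..s} \<Longrightarrow> Q \<in> Xs k \<Longrightarrow> m \<le> count_through Q cs"
    and "m \<le> count_through E cs" and "\<And>E'. E' \<in> Xs 2 \<Longrightarrow> 1 \<le> count_through E' cs"
proof -
  have "line_through (1,0,0) E \<noteq> 0"
    using E unfolding Xs_2 by (auto simp: line_through_def zero_prod_def)
  then obtain k where k: "k \<in> {3..s}" and off: "\<And>Q. Q \<in> Xs k \<Longrightarrow> \<not> on_line (line_through (1,0,0) E) Q"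
    using exists_block_off_line[OF _ on_line_line_through_left E on_line_line_through_right] by blast
  have card: "card (Xs k) = k" using k by (intro card_Xs) simp
  then have "finite (Xs k)" using k by (intro card_ge_0_finite) simp
  then obtain qs where qs: "set qs = Xs k" "distinct qs" using finite_distinct_list by blast
  have qs_length: "length qs = k" using qs card distinct_card by metis
  define ks where "ks = remove1 k [3..<Suc s]"
  have ks: "set ks = {3..s} - {k}" "length ks = s - 3"
    using k by (auto simp: ks_def length_remove1 set_remove1_eq simp del: upt_Suc)
  define cs where "cs = replicate (m - k) (1,0,0) @ replicate (m - 1) (Ls k)
    @ replicate_each m (map Ls ks) @ map (\<lambda>Q. line_through Q E) qs"
  show ?thesis
  proof (rule that)
    have "m * s = m * (s - 3) + 3 * m"
      using k by (simp add: diff_mult_distrib2)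
    then show "length cs + (m - 1) = m * s - 2"
      using k m_ge ks qs_length by (simp add: cs_def)
  next
    have "fst (line_through Q E) \<noteq> 0" if "Q \<in> Xs k" for Q
      using off[OF that] fst_line_through_eq_0_iff by blast
    then show "prod_list (map fst cs) \<noteq> 0"
      using fst_Ls_prod_nonzero[of ks] fst_Ls_nonzero[of k] k ks qs
      by (auto simp: cs_def prod_list_fst_replicate_each prod_list_zero_iff)
  next
    fix j Q assume j: "j \<in> {3..s}" and Q: "Q \<in> Xs j"
    have on: "on_line (Ls j) Q" using j Q by (intro on_line_Ls) auto
    show "m \<le> count_through Q cs"
    proof (cases "j = k")
      case True
      then have "1 \<le> count_through Q (map (\<lambda>Q. line_through Q E) qs)"
        using Q qs(1)
          count_through_map_ge_1[of Q qs "\<lambda>Q. line_through Q E" Q, OF _ on_line_line_through_left]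
        by simp
      then show ?thesis using on True by (simp add: cs_def)
    next
      case False
      then have "m \<le> count_through Q (replicate_each m (map Ls ks))"
        using j ks(1) on by (intro count_through_replicate_each_ge) auto
      then show ?thesis by (simp add: cs_def)
    qed
  next
    have "count_through E (map (\<lambda>Q. line_through Q E) qs) = k"
      using qs_length
        count_through_map_all[of qs "\<lambda>Q. line_through Q E" E, OF on_line_line_through_right]
      by simp
    moreover have "on_line (1,0,0) E" using E unfolding Xs_2 by (auto simp: on_line_def)
    ultimately show "m \<le> count_through E cs"
      using k m_ge by (simp add: cs_def)
  next
    fix E' assume "E' \<in> Xs 2"
    then have "on_line (1,0,0) E'" unfolding Xs_2 by (auto simp: on_line_def)
    moreover have "1 \<le> m - k" using k m_ge by auto
    ultimately have "1 \<le> count_through E' (replicate (m - k) (1,0,0))" by simp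
    then show "1 \<le> count_through E' cs" unfolding cs_def count_through_append by linarith
  qed
qed

lemma edge_monomial_mem_J:
  assumes deg: "mdeg (a,b,c) = m * s - 2" and bc: "b + c = m - 1" "b = 0 \<or> c = 0"
  shows "Poly_Mapping.single (a,b,c) 1 \<in> J"
proof -
  define W :: "'a pt3 list" where "W = replicate b (0,1,0) @ replicate c (0,0,1)"
  define E :: "'a pt3" where "E = (if c = 0 then (0,1,0) else (0,0,1))"
  have "E \<in> Xs 2" by (simp add: E_def Xs_2)
  then obtain cs where len: "length cs + (m - 1) = m * s - 2" and nz: "prod_list (map fst cs) \<noteq> 0"
    and high: "\<And>k Q. k \<in> {3..s} \<Longrightarrow> Q \<in> Xs k \<Longrightarrow> m \<le> count_through Q cs"
    and at_E: "m \<le> count_through E cs" and at_Xs_2: "\<And>E'. E' \<in> Xs 2 \<Longrightarrow> 1 \<le> count_through E' cs"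
    using obtain_edge_forms by blast
  have W: "count_through E' W = m - 1" if "E' \<in> Xs 2" "E' \<noteq> E" for E'
    using that bc unfolding Xs_2 by (auto simp: W_def E_def on_line_def split: if_splits)
  have "forms_prod (W @ cs) \<in> J"
  proof (rule forms_prod_mem_J)
    fix E' assume "E' \<in> Xs 2"
    then show "m \<le> count_through E' (W @ cs)"
      using W[of E'] at_E at_Xs_2[of E'] by (cases "E' = E") auto
  next
    fix k Q assume "k \<in> {3..s}" "Q \<in> Xs k"
    then have "m \<le> count_through Q cs" by (rule high)
    then show "m \<le> count_through Q (W @ cs)" by simp
  qed
  then have "forms_prod (replicate b (0,1,0) @ replicate c (0,0,1) @ cs) \<in> J"
    by (simp add: W_def)
  moreover have "b + c + 1 = m" using bc(1) m_ge by simp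
  then have "contains_upper_monomials J (m * s - 2) (b + c + 1)"
    using contains_upper_monomials_m by simp
  moreover have "length cs + b + c = m * s - 2" using len bc(1) by simp
  ultimately have "Poly_Mapping.single (length cs, b, c) 1 \<in> J"
    using monomial_mem_of_forms_prod_mem[OF is_ideal_J] nz by blast
  moreover have "a = length cs" using deg len bc(1) by (simp add: mdeg_def)
  ultimately show ?thesis by simp
qed

lemma contains_upper_monomials_pred:
  assumes "n < m" and upper: "contains_upper_monomials J (m * s - 2) (Suc n)"
  shows "contains_upper_monomials J (m * s - 2) n"
  unfolding contains_upper_monomials_def
proof (intro allI impI)
  fix \<mu> :: monom assume \<mu>: "mdeg \<mu> = m * s - 2 \<and> n \<le> deg_x12 \<mu>"
  obtain a b c where abc: "\<mu> = (a,b,c)" by (cases \<mu>)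
  show "Poly_Mapping.single \<mu> 1 \<in> J"
  proof (cases "Suc n \<le> deg_x12 \<mu>")
    case True
    then show ?thesis using upper \<mu> unfolding contains_upper_monomials_def by blast
  next
    case False
    then have level: "b + c = n" using \<mu> abc by (simp add: deg_x12_def)
    show ?thesis
    proof (cases "b \<le> m - 2 \<and> c \<le> m - 2")
      case True
      then show ?thesis
        using interior_monomial_mem_J[of a b c] upper \<mu> abc level by simp
    next
      case False
      then have "b + c = m - 1" "b = 0 \<or> c = 0" using level \<open>n < m\<close> by auto
      then show ?thesis using edge_monomial_mem_J \<mu> abc by simp
    qed
  qed
qed

lemma homog_subset_J: "homog (m * s - 2) \<subseteq> J"
proof
  fix f :: "'a mpoly3" assume f: "f \<in> homog (m * s - 2)"
  have "contains_upper_monomials J (m * s - 2) 0"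
    by (rule inc_induct[of 0 m]) (simp_all add: contains_upper_monomials_m contains_upper_monomials_pred)
  then show "f \<in> J"
    using f by (rule homog_mem_of_contains_upper_monomials[OF is_ideal_J]) auto
qed

end

theorem mainTheorem14:
  fixes X :: "'a::field pt3 set" and s :: nat
    and Xs :: "nat \<Rightarrow> 'a pt3 set" and Ls :: "nat \<Rightarrow> 'a pt3"
  assumes "alg_closed TYPE('a)"
    and "s \<ge> 2"
    and "kconfig_with X s (\<lambda>i. i) Xs Ls"
    and "Xs 1 = {(1, 0, 0)}"
    and "\<forall>L. L \<noteq> 0 \<longrightarrow> on_line L (1, 0, 0) \<longrightarrow> card {Q\<in>X. on_line L Q} < s"
    and "Xs 2 = {(0, 1, 0), (0, 0, 1)}"
  shows "\<forall>m::nat. m \<ge> s + 1 \<longrightarrow>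
           homog (m * s - 2) \<subseteq>
             ideal_sum (ideal_fat (X - {(1, 0, 0)}) m) (ideal_pow (ideal_pt (1, 0, 0)) m)"
proof (intro allI impI)
  fix m :: nat
  assume "m \<ge> s + 1"
  with assms(2-6) interpret kconfig_1_to_s_power X s Xs Ls m
    by unfold_locales auto
  show "homog (m * s - 2) \<subseteq> J" by (rule homog_subset_J)
qed

end
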